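(* For any sequence of groups $(G_n)_{n\in\mathbb N}$, the archipelago group $\mathcal A(G_n)$ is torsion-free.
   Context: For a sequence of groups $(G_n)_{n\in\mathbb N}$, an infinite word is a map $w:L\to\bigsqcup_n (G_n\setminus\{1\})$ from a countable linearly ordered set $L$ such that $w^{-1}(G_n)$ is finite for every $n$. Two infinite words are equivalent if for every $m$ their restrictions to the letters from $G_1,\dots,G_m$ represent the same element of $G_1*\cdots*G_m$. The topologist's product $\circledast_n G_n$ is the group of equivalence classes, with multiplication induced by concatenation and inversion by reversing the order and inverting each letter. The free product $*_n G_n$ is the subgroup of classes of finite words. The archipelago group is $\mathcal A(G_n):=\circledast_n G_n/\langle\langle *_n G_n\rangle\rangle$ (quotient by the normal closure). *)

theory Defs
  imports "HOL-Algebra.Algebra"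
begin

text \<open>Two finite words represent the same element of the free product iff they are
  related by the equivalence relation generated by merging two adjacent letters
  from the same factor (deleting the result if it is the identity).\<close>

inductive fp_step :: "(nat \<Rightarrow> ('a, 'b) monoid_scheme) \<Rightarrow> (nat \<times> 'a) list \<Rightarrow> (nat \<times> 'a) list \<Rightarrow> bool"
  for G where
  merge: "\<lbrakk>a \<in> carrier (G n); b \<in> carrier (G n); a \<otimes>\<^bsub>G n\<^esub> b \<noteq> \<one>\<^bsub>G n\<^esub>\<rbrakk>
          \<Longrightarrow> fp_step G (xs @ [(n, a), (n, b)] @ ys) (xs @ [(n, a \<otimes>\<^bsub>G n\<^esub> b)] @ ys)"
| cancel: "\<lbrakk>a \<in> carrier (G n); b \<in> carrier (G n); a \<otimes>\<^bsub>G n\<^esub> b = \<one>\<^bsub>G n\<^esub>\<rbrakk>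
          \<Longrightarrow> fp_step G (xs @ [(n, a), (n, b)] @ ys) (xs @ ys)"

definition fp_equiv :: "(nat \<Rightarrow> ('a, 'b) monoid_scheme) \<Rightarrow> (nat \<times> 'a) list \<Rightarrow> (nat \<times> 'a) list \<Rightarrow> bool" where
  "fp_equiv G = equivclp (fp_step G)"

text \<open>An infinite word is indexed by a countable linearly ordered set; every such set
  embeds order-preservingly into the rationals, so we model an infinite word as a
  partial map from the rationals to letters (its domain being the index set).\<close>

definition is_word :: "(nat \<Rightarrow> ('a, 'b) monoid_scheme) \<Rightarrow> (rat \<Rightarrow> (nat \<times> 'a) option) \<Rightarrow> bool" where
  "is_word G w \<longleftrightarrow>
     (\<forall>q n a. w q = Some (n, a) \<longrightarrow> a \<in> carrier (G n) \<and> a \<noteq> \<one>\<^bsub>G n\<^esub>) \<and>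
     (\<forall>n. finite {q. \<exists>a. w q = Some (n, a)})"

definition restr :: "nat \<Rightarrow> (rat \<Rightarrow> (nat \<times> 'a) option) \<Rightarrow> (nat \<times> 'a) list" where
  "restr m w = map (\<lambda>q. the (w q)) (sorted_list_of_set {q. \<exists>n a. w q = Some (n, a) \<and> n \<le> m})"

definition word_equiv :: "(nat \<Rightarrow> ('a, 'b) monoid_scheme) \<Rightarrow> (rat \<Rightarrow> (nat \<times> 'a) option) \<Rightarrow> (rat \<Rightarrow> (nat \<times> 'a) option) \<Rightarrow> bool" where
  "word_equiv G u v \<longleftrightarrow> (\<forall>m. fp_equiv G (restr m u) (restr m v))"

text \<open>Order isomorphism from the open interval (-1,1) of rationals onto all rationals.\<close>
definition squeeze_inv :: "rat \<Rightarrow> rat" where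
  "squeeze_inv y = y / (1 - \<bar>y\<bar>)"

definition concat_word :: "(rat \<Rightarrow> 'c option) \<Rightarrow> (rat \<Rightarrow> 'c option) \<Rightarrow> rat \<Rightarrow> 'c option" where
  "concat_word u v q =
     (if -3 < q \<and> q < -1 then u (squeeze_inv (q + 2))
      else if 1 < q \<and> q < 3 then v (squeeze_inv (q - 2))
      else None)"

definition word_class :: "(nat \<Rightarrow> ('a, 'b) monoid_scheme) \<Rightarrow> (rat \<Rightarrow> (nat \<times> 'a) option) \<Rightarrow> (rat \<Rightarrow> (nat \<times> 'a) option) set" where
  "word_class G u = {v. is_word G v \<and> word_equiv G u v}"

definition top_product :: "(nat \<Rightarrow> ('a, 'b) monoid_scheme) \<Rightarrow> ((rat \<Rightarrow> (nat \<times> 'a) option) set) monoid" where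
  "top_product G =
     \<lparr> carrier = word_class G ` {u. is_word G u},
       monoid.mult = (\<lambda>A B. word_class G (concat_word (SOME u. u \<in> A) (SOME v. v \<in> B))),
       monoid.one = word_class G (\<lambda>_. None) \<rparr>"

definition free_product_sub :: "(nat \<Rightarrow> ('a, 'b) monoid_scheme) \<Rightarrow> ((rat \<Rightarrow> (nat \<times> 'a) option) set) set" where
  "free_product_sub G = {C \<in> carrier (top_product G). \<exists>u \<in> C. finite {q. u q \<noteq> None}}"

definition normal_closure :: "('c, 'd) monoid_scheme \<Rightarrow> 'c set \<Rightarrow> 'c set" where
  "normal_closure H S = generate H (\<Union>g \<in> carrier H. (\<lambda>h. g \<otimes>\<^bsub>H\<^esub> h \<otimes>\<^bsub>H\<^esub> inv\<^bsub>H\<^esub> g) ` S)"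

definition archipelago where
  "archipelago G = top_product G Mod normal_closure (top_product G) (free_product_sub G)"

definition torsion_free :: "('c, 'd) monoid_scheme \<Rightarrow> bool" where
  "torsion_free H \<longleftrightarrow>
     (\<forall>x \<in> carrier H. \<forall>k::nat. k > 0 \<and> x [^]\<^bsub>H\<^esub> k = \<one>\<^bsub>H\<^esub> \<longrightarrow> x = \<one>\<^bsub>H\<^esub>)"

end

theory Submission
  imports Defs
begin

text \<open>Let N be the normal closure of the free product in the topologist's product. A word lies
  in N iff for some M its letters from the factors beyond M cancel out in every finite stage: the
  letters from the first M factors can then be removed one at a time, each being conjugate to an
  element of the free product. So the quotient is torsion-free once this condition passes from
  w^k to w. Suppose it holds for w^k with bound M, and take a stage m0 in which the letters
  of w beyond M do not cancel (if there is none, we are done). In every stage m the letters of w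
  beyond M form a torsion element of a free product of finitely many groups; such an element is
  conjugate into a single factor, so its image in the factors up to m0 or its image in the
  factors beyond m0 is trivial. The former is the non-cancelling stage m0, hence the letters of w
  beyond m0 cancel in every stage.\<close>

section \<open>Free products\<close>

fun alternating :: "(nat \<times> 'a) list \<Rightarrow> bool" where
  "alternating (x # y # r) \<longleftrightarrow> fst x \<noteq> fst y \<and> alternating (y # r)"
| "alternating _ \<longleftrightarrow> True"

lemma alternating_Cons:
  "alternating (x # r) \<longleftrightarrow> alternating r \<and> (r \<noteq> [] \<longrightarrow> fst x \<noteq> fst (hd r))"
  by (cases r) auto

lemma alternating_append:
  "alternating r \<Longrightarrow> alternating s \<Longrightarrow> (r \<noteq> [] \<Longrightarrow> s \<noteq> [] \<Longrightarrow> fst (last r) \<noteq> fst (hd s))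
    \<Longrightarrow> alternating (r @ s)"
  by (induction r) (auto simp: alternating_Cons hd_append split: if_splits)

locale group_family =
  fixes G :: "nat \<Rightarrow> ('a, 'b) monoid_scheme"
  assumes group_factor: "\<And>n. group (G n)"
begin

lemma factor_one_closed [simp]: "\<one>\<^bsub>G n\<^esub> \<in> carrier (G n)"
  and factor_m_closed [simp]:
    "a \<in> carrier (G n) \<Longrightarrow> b \<in> carrier (G n) \<Longrightarrow> a \<otimes>\<^bsub>G n\<^esub> b \<in> carrier (G n)"
  and factor_inv_closed [simp]: "a \<in> carrier (G n) \<Longrightarrow> inv\<^bsub>G n\<^esub> a \<in> carrier (G n)"
  and factor_l_one [simp]: "a \<in> carrier (G n) \<Longrightarrow> \<one>\<^bsub>G n\<^esub> \<otimes>\<^bsub>G n\<^esub> a = a"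
  and factor_r_one [simp]: "a \<in> carrier (G n) \<Longrightarrow> a \<otimes>\<^bsub>G n\<^esub> \<one>\<^bsub>G n\<^esub> = a"
  and factor_inv_eq_1_iff [simp]: "a \<in> carrier (G n) \<Longrightarrow> inv\<^bsub>G n\<^esub> a = \<one>\<^bsub>G n\<^esub> \<longleftrightarrow> a = \<one>\<^bsub>G n\<^esub>"
  using group.is_monoid[OF group_factor[of n]] group_factor[of n]
  by (simp_all add: group.inv_eq_1_iff monoid.m_closed)

lemma factor_m_assoc:
  "a \<in> carrier (G n) \<Longrightarrow> b \<in> carrier (G n) \<Longrightarrow> c \<in> carrier (G n)
    \<Longrightarrow> a \<otimes>\<^bsub>G n\<^esub> b \<otimes>\<^bsub>G n\<^esub> c = a \<otimes>\<^bsub>G n\<^esub> (b \<otimes>\<^bsub>G n\<^esub> c)"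
  using group_factor[of n] by (simp add: group.is_monoid monoid.m_assoc)

abbreviation fp_equiv_infix (infix "\<asymp>" 50) where "x \<asymp> y \<equiv> fp_equiv G x y"

text \<open>Equivalence chains between words without identity letters can pass through words with
  identity letters (by undoing a merge), so invariance under \<^const>\<open>fp_step\<close> is proved for
  the weaker condition \<open>in_factors\<close>.\<close>

definition in_factors :: "(nat \<times> 'a) list \<Rightarrow> bool" where
  "in_factors xs \<longleftrightarrow> (\<forall>l\<in>set xs. snd l \<in> carrier (G (fst l)))"

definition proper :: "(nat \<times> 'a) list \<Rightarrow> bool" where
  "proper xs \<longleftrightarrow> (\<forall>l\<in>set xs. snd l \<in> carrier (G (fst l)) \<and> snd l \<noteq> \<one>\<^bsub>G (fst l)\<^esub>)"

definition reduced :: "(nat \<times> 'a) list \<Rightarrow> bool" where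
  "reduced xs \<longleftrightarrow> proper xs \<and> alternating xs"

lemma in_factors_simps [simp]:
  "in_factors []"
  "in_factors (x # xs) \<longleftrightarrow> snd x \<in> carrier (G (fst x)) \<and> in_factors xs"
  "in_factors (xs @ ys) \<longleftrightarrow> in_factors xs \<and> in_factors ys"
  by (auto simp: in_factors_def)

lemma proper_simps [simp]:
  "proper []"
  "proper (x # xs) \<longleftrightarrow> snd x \<in> carrier (G (fst x)) \<and> snd x \<noteq> \<one>\<^bsub>G (fst x)\<^esub> \<and> proper xs"
  "proper (xs @ ys) \<longleftrightarrow> proper xs \<and> proper ys"
  by (auto simp: proper_def)

lemma proper_in_factors: "proper xs \<Longrightarrow> in_factors xs"
  by (auto simp: proper_def in_factors_def)

lemma proper_filter: "proper xs \<Longrightarrow> proper (filter P xs)"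
  by (auto simp: proper_def)

lemma reduced_proper: "reduced xs \<Longrightarrow> proper xs"
  by (simp add: reduced_def)

lemma reduced_Nil [simp]: "reduced []"
  by (simp add: reduced_def)

lemma reduced_Cons:
  "reduced (x # r) \<longleftrightarrow> snd x \<in> carrier (G (fst x)) \<and> snd x \<noteq> \<one>\<^bsub>G (fst x)\<^esub> \<and> reduced r
    \<and> (r \<noteq> [] \<longrightarrow> fst x \<noteq> fst (hd r))"
  by (auto simp: reduced_def alternating_Cons)

text \<open>For reduced r, \<open>push n a r\<close> is the reduced form of \<open>(n, a) # r\<close>.\<close>

definition push :: "nat \<Rightarrow> 'a \<Rightarrow> (nat \<times> 'a) list \<Rightarrow> (nat \<times> 'a) list" where
  "push n a r = (case r of
      [] \<Rightarrow> if a = \<one>\<^bsub>G n\<^esub> then [] else [(n, a)]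
    | (m, b) # r' \<Rightarrow>
        if n = m then (if a \<otimes>\<^bsub>G n\<^esub> b = \<one>\<^bsub>G n\<^esub> then r' else (n, a \<otimes>\<^bsub>G n\<^esub> b) # r')
        else if a = \<one>\<^bsub>G n\<^esub> then r else (n, a) # r)"

definition reduce :: "(nat \<times> 'a) list \<Rightarrow> (nat \<times> 'a) list" where
  "reduce xs = foldr (\<lambda>l r. push (fst l) (snd l) r) xs []"

lemma reduce_Nil [simp]: "reduce [] = []"
  and reduce_Cons [simp]: "reduce (x # xs) = push (fst x) (snd x) (reduce xs)"
  by (simp_all add: reduce_def)

lemma reduce_append: "reduce (xs @ ys) = foldr (\<lambda>l r. push (fst l) (snd l) r) xs (reduce ys)"
  by (simp add: reduce_def)

lemma reduced_push: "a \<in> carrier (G n) \<Longrightarrow> reduced r \<Longrightarrow> reduced (push n a r)"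
  by (cases r) (auto simp: push_def reduced_Cons split: if_splits)

lemma push_push:
  assumes a: "a \<in> carrier (G n)" and b: "b \<in> carrier (G n)" and r: "reduced r"
  shows "push n a (push n b r) = push n (a \<otimes>\<^bsub>G n\<^esub> b) r"
proof (cases r)
  case (Cons x r')
  obtain m c where x: "x = (m, c)" by force
  show ?thesis
  proof (cases "n = m")
    case True
    have c: "c \<in> carrier (G n)" using r Cons x True by (simp add: reduced_Cons)
    have r': "r' = [] \<or> fst (hd r') \<noteq> n" using r Cons x True by (auto simp: reduced_Cons)
    show ?thesis
    proof (cases "b \<otimes>\<^bsub>G n\<^esub> c = \<one>\<^bsub>G n\<^esub>")
      case True
      then have "a \<otimes>\<^bsub>G n\<^esub> b \<otimes>\<^bsub>G n\<^esub> c = a" using a b c by (simp add: factor_m_assoc)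
      then show ?thesis
        using True \<open>n = m\<close> Cons x r' by (cases r') (auto simp: push_def)
    qed (use \<open>n = m\<close> Cons x a b c in \<open>auto simp: push_def factor_m_assoc\<close>)
  qed (use Cons x a b in \<open>auto simp: push_def\<close>)
qed (use a b in \<open>auto simp: push_def\<close>)

lemma push_one: "reduced r \<Longrightarrow> push n \<one>\<^bsub>G n\<^esub> r = r"
  by (cases r) (auto simp: push_def reduced_Cons split: prod.splits)

lemma reduced_reduce: "in_factors xs \<Longrightarrow> reduced (reduce xs)"
  by (induction xs) (auto intro: reduced_push)

lemma push_reduced: "reduced ((n, a) # r) \<Longrightarrow> push n a r = (n, a) # r"
  by (cases r) (auto simp: push_def reduced_Cons)

lemma reduce_reduced: "reduced r \<Longrightarrow> reduce r = r"
proof (induction r)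
  case (Cons x r)
  then have "reduce r = r" by (simp add: reduced_Cons)
  with Cons.prems show ?case using push_reduced[of "fst x" "snd x" r] by simp
qed simp

lemma length_foldr_push:
  "length (foldr (\<lambda>l r. push (fst l) (snd l) r) xs r) \<le> length xs + length r"
proof (induction xs)
  case (Cons x xs)
  let ?r = "foldr (\<lambda>l r. push (fst l) (snd l) r) xs r"
  have "length (push (fst x) (snd x) ?r) \<le> Suc (length ?r)"
    by (auto simp: push_def split: list.splits)
  with Cons.IH show ?case by simp
qed simp

lemma fp_step_in_factors: "fp_step G xs ys \<Longrightarrow> in_factors xs \<longleftrightarrow> in_factors ys"
  by (induction rule: fp_step.induct) auto

lemma fp_step_reduce: "fp_step G xs ys \<Longrightarrow> in_factors xs \<Longrightarrow> reduce xs = reduce ys"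
proof (induction rule: fp_step.induct)
  case (merge a n b xs ys)
  then show ?case by (simp add: reduce_append push_push reduced_reduce)
next
  case (cancel a n b xs ys)
  then show ?case by (simp add: reduce_append push_push push_one reduced_reduce)
qed

lemma fp_equiv_reduce: "x \<asymp> y \<Longrightarrow> in_factors x \<Longrightarrow> reduce x = reduce y \<and> in_factors y"
  unfolding fp_equiv_def
proof (induction rule: equivclp_induct)
  case (step y z)
  then show ?case using fp_step_in_factors fp_step_reduce by metis
qed simp

lemma fp_equiv_refl [simp]: "x \<asymp> x"
  by (simp add: fp_equiv_def)

lemma fp_equiv_sym: "x \<asymp> y \<Longrightarrow> y \<asymp> x"
  by (simp add: fp_equiv_def equivclp_sym)

lemma fp_equiv_trans [trans]: "x \<asymp> y \<Longrightarrow> y \<asymp> z \<Longrightarrow> x \<asymp> z"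
  unfolding fp_equiv_def by (rule equivclp_trans)

lemma fp_step_fp_equiv: "fp_step G x y \<Longrightarrow> x \<asymp> y"
  unfolding fp_equiv_def by blast

lemma fp_step_context: "fp_step G x y \<Longrightarrow> fp_step G (p @ x @ s) (p @ y @ s)"
proof (induction rule: fp_step.induct)
  case (merge a n b xs ys)
  then show ?case using fp_step.merge[of a G n b "p @ xs" "ys @ s"] by simp
next
  case (cancel a n b xs ys)
  then show ?case using fp_step.cancel[of a G n b "p @ xs" "ys @ s"] by simp
qed

lemma fp_equiv_context: "x \<asymp> y \<Longrightarrow> p @ x @ s \<asymp> p @ y @ s"
  unfolding fp_equiv_def
proof (induction rule: equivclp_induct)
  case (step y z)
  then show ?case using fp_step_context by (meson equivclp_into_equivclp)
qed simp

lemma fp_equiv_append: "a \<asymp> b \<Longrightarrow> c \<asymp> d \<Longrightarrow> a @ c \<asymp> b @ d"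
  using fp_equiv_context[of a b "[]" c] fp_equiv_context[of c d b "[]"] by (simp add: fp_equiv_trans)

lemma fp_equiv_cancel_pair:
  "a \<in> carrier (G n) \<Longrightarrow> b \<in> carrier (G n) \<Longrightarrow> a \<otimes>\<^bsub>G n\<^esub> b = \<one>\<^bsub>G n\<^esub> \<Longrightarrow> [(n, a), (n, b)] \<asymp> []"
  using fp_step.cancel[of a G n b "[]" "[]"] by (auto intro: fp_step_fp_equiv)

lemma push_fp_equiv:
  assumes r: "reduced r" and a: "a \<in> carrier (G n)" "a \<noteq> \<one>\<^bsub>G n\<^esub>"
  shows "(n, a) # r \<asymp> push n a r"
proof (cases r)
  case (Cons x r')
  obtain m b where x: "x = (m, b)" by force
  have b: "b \<in> carrier (G m)" using r Cons x by (simp add: reduced_Cons)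
  show ?thesis
  proof (cases "n = m")
    case True
    then show ?thesis
      using fp_step.cancel[of a G n b "[]" r'] fp_step.merge[of a G n b "[]" r'] Cons x a b
      by (auto simp: push_def intro: fp_step_fp_equiv)
  qed (use Cons x a in \<open>auto simp: push_def\<close>)
qed (use a in \<open>auto simp: push_def\<close>)

lemma fp_equiv_reduce_self: "proper xs \<Longrightarrow> xs \<asymp> reduce xs"
proof (induction xs)
  case (Cons x xs)
  have "x # xs \<asymp> x # reduce xs" using Cons fp_equiv_context[of xs "reduce xs" "[x]" "[]"] by simp
  also have "\<dots> \<asymp> reduce (x # xs)"
    using push_fp_equiv[of "reduce xs" "snd x" "fst x"] Cons.prems
    by (simp add: reduced_reduce proper_in_factors)
  finally show ?case .
qed simp

theorem fp_equiv_iff_reduce: "proper x \<Longrightarrow> proper y \<Longrightarrow> x \<asymp> y \<longleftrightarrow> reduce x = reduce y"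
  using fp_equiv_reduce proper_in_factors fp_equiv_reduce_self fp_equiv_sym fp_equiv_trans by metis

definition inv_list :: "(nat \<times> 'a) list \<Rightarrow> (nat \<times> 'a) list" where
  "inv_list xs = rev (map (\<lambda>l. (fst l, inv\<^bsub>G (fst l)\<^esub> (snd l))) xs)"

lemma inv_list_simps [simp]:
  "inv_list [] = []"
  "inv_list (x # xs) = inv_list xs @ [(fst x, inv\<^bsub>G (fst x)\<^esub> (snd x))]"
  "inv_list (xs @ ys) = inv_list ys @ inv_list xs"
  by (auto simp: inv_list_def)

lemma filter_inv_list: "filter (\<lambda>l. P (fst l)) (inv_list xs) = inv_list (filter (\<lambda>l. P (fst l)) xs)"
  by (induction xs) auto

lemma r_inv_list: "proper v \<Longrightarrow> v @ inv_list v \<asymp> []"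
proof (induction v)
  case (Cons x v)
  obtain n a where x: "x = (n, a)" by force
  have "x # v @ inv_list v @ [(n, inv\<^bsub>G n\<^esub> a)] \<asymp> [x] @ [] @ [(n, inv\<^bsub>G n\<^esub> a)]"
    using fp_equiv_context[of "v @ inv_list v" "[]" "[x]"] Cons by auto
  moreover have "[(n, a), (n, inv\<^bsub>G n\<^esub> a)] \<asymp> []"
    using Cons.prems x group.r_inv[OF group_factor] by (intro fp_equiv_cancel_pair) auto
  ultimately show ?case using x by (auto intro: fp_equiv_trans)
qed simp

lemma l_inv_list: "proper v \<Longrightarrow> inv_list v @ v \<asymp> []"
proof (induction v)
  case (Cons x v)
  obtain n a where x: "x = (n, a)" by force
  have "[(n, inv\<^bsub>G n\<^esub> a), (n, a)] \<asymp> []"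
    using Cons.prems x group.l_inv[OF group_factor] by (intro fp_equiv_cancel_pair) auto
  then have "inv_list v @ [(n, inv\<^bsub>G n\<^esub> a), (n, a)] @ v \<asymp> inv_list v @ [] @ v"
    by (rule fp_equiv_context)
  then show ?case using Cons x by (auto intro: fp_equiv_trans)
qed simp

lemma fp_equiv_Nil_inv_list: "proper x \<Longrightarrow> x \<asymp> [] \<Longrightarrow> inv_list x \<asymp> []"
  using fp_equiv_append[OF fp_equiv_refl fp_equiv_sym, of x "[]" "inv_list x"] l_inv_list[of x]
  by (simp add: fp_equiv_trans)

end

section \<open>Torsion in free products\<close>

definition list_power :: "nat \<Rightarrow> 'x list \<Rightarrow> 'x list" where
  "list_power k xs = concat (replicate k xs)"

lemma list_power_0 [simp]: "list_power 0 xs = []"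
  and list_power_Suc: "list_power (Suc k) xs = xs @ list_power k xs"
  by (simp_all add: list_power_def)

lemma list_power_Suc': "list_power (Suc k) xs = list_power k xs @ xs"
  by (induction k) (simp_all add: list_power_def)

lemma filter_list_power: "filter P (list_power k xs) = list_power k (filter P xs)"
  by (induction k) (simp_all add: list_power_Suc)

lemma list_power_nonempty: "0 < k \<Longrightarrow> xs \<noteq> [] \<Longrightarrow> list_power k xs \<noteq> []"
  by (cases k) (auto simp: list_power_Suc)

lemma hd_list_power: "list_power k xs \<noteq> [] \<Longrightarrow> hd (list_power k xs) = hd xs"
  by (cases k; cases xs) (auto simp: list_power_Suc list_power_def)

context group_family
begin

lemma fp_equiv_list_power: "x \<asymp> y \<Longrightarrow> list_power k x \<asymp> list_power k y"
  by (induction k) (auto simp: list_power_Suc intro: fp_equiv_append)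

lemma reduced_list_power:
  assumes "reduced r" "r \<noteq> []" "fst (hd r) \<noteq> fst (last r)"
  shows "reduced (list_power k r)"
proof (induction k)
  case (Suc k)
  have "alternating (r @ list_power k r)"
    using assms Suc hd_list_power[of k r]
    by (intro alternating_append) (auto simp: reduced_def)
  with Suc assms show ?case by (simp add: reduced_def list_power_Suc)
qed simp

lemma reduced_not_fp_equiv_Nil: "reduced r \<Longrightarrow> r \<noteq> [] \<Longrightarrow> \<not> r \<asymp> []"
  using fp_equiv_iff_reduce[of r "[]"] reduce_reduced reduced_proper by auto

lemma list_power_conj:
  "proper v \<Longrightarrow> list_power k (inv_list v @ r @ v) \<asymp> inv_list v @ list_power k r @ v"
proof (induction k)
  case 0
  then show ?case using l_inv_list[of v] fp_equiv_sym by simp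
next
  case (Suc k)
  have "list_power (Suc k) (inv_list v @ r @ v) \<asymp> (inv_list v @ r @ v) @ (inv_list v @ list_power k r @ v)"
    using Suc by (simp add: list_power_Suc fp_equiv_append)
  also have "\<dots> = (inv_list v @ r) @ (v @ inv_list v) @ (list_power k r @ v)"
    by simp
  also have "\<dots> \<asymp> (inv_list v @ r) @ [] @ (list_power k r @ v)"
    using r_inv_list[OF Suc.prems] by (rule fp_equiv_context)
  finally show ?case by (simp add: list_power_Suc)
qed

lemma fp_equiv_unconj:
  assumes v: "proper v" and r: "inv_list v @ r @ v \<asymp> r'"
  shows "r \<asymp> v @ r' @ inv_list v"
proof -
  have "r = [] @ r @ []" by simp
  also have "\<dots> \<asymp> (v @ inv_list v) @ r @ (v @ inv_list v)"
    using r_inv_list[OF v] fp_equiv_sym by (intro fp_equiv_append) auto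
  also have "\<dots> = v @ (inv_list v @ r @ v) @ inv_list v"
    by simp
  also have "\<dots> \<asymp> v @ r' @ inv_list v"
    using r by (rule fp_equiv_context)
  finally show ?thesis .
qed

text \<open>Conjugating a word whose first and last letters lie in the same factor by its first
  letter merges these two letters, so the reduced form gets shorter.\<close>

lemma cyclic_reduction:
  assumes r: "proper (x # s @ [y])" and xy: "fst x = fst y"
    and pow: "list_power k (x # s @ [y]) \<asymp> []"
  obtains r' where "reduced r'" "length r' < length (x # s @ [y])" "list_power k r' \<asymp> []"
    "x # s @ [y] \<asymp> [x] @ r' @ inv_list [x]"
proof
  let ?r = "x # s @ [y]" and ?r' = "reduce (s @ [y, x])"
  have px: "proper [x]"
    using r by simp
  show "reduced ?r'"
    using r by (auto intro!: reduced_reduce proper_in_factors)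
  have "length (reduce [y, x]) \<le> 1"
    using xy by (auto simp: push_def)
  then show "length ?r' < length ?r"
    using length_foldr_push[of s "reduce [y, x]"] by (simp add: reduce_append)
  have "inv_list [x] @ ?r @ [x] = (inv_list [x] @ [x]) @ (s @ [y, x])"
    by simp
  also have "\<dots> \<asymp> [] @ (s @ [y, x])"
    using l_inv_list[OF px] by (intro fp_equiv_append) auto
  also have "\<dots> \<asymp> ?r'"
    using r fp_equiv_reduce_self[of "s @ [y, x]"] by simp
  finally have conj: "inv_list [x] @ ?r @ [x] \<asymp> ?r'" .
  then show "?r \<asymp> [x] @ ?r' @ inv_list [x]"
    by (rule fp_equiv_unconj[OF px])
  have "list_power k ?r' \<asymp> list_power k (inv_list [x] @ ?r @ [x])"
    using fp_equiv_list_power[OF fp_equiv_sym[OF conj]] .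
  also have "\<dots> \<asymp> inv_list [x] @ list_power k ?r @ [x]"
    using px by (rule list_power_conj)
  also have "\<dots> \<asymp> inv_list [x] @ [] @ [x]"
    using pow by (rule fp_equiv_context)
  also have "\<dots> \<asymp> []"
    using l_inv_list[OF px] by simp
  finally show "list_power k ?r' \<asymp> []" .
qed

lemma reduced_torsion_conj_factor:
  "reduced r \<Longrightarrow> 0 < k \<Longrightarrow> list_power k r \<asymp> []
    \<Longrightarrow> \<exists>v h j. proper v \<and> (\<forall>l\<in>set h. fst l = j) \<and> r \<asymp> v @ h @ inv_list v"
proof (induction "length r" arbitrary: r rule: less_induct)
  case less
  consider "length r \<le> 1" | x s y where "r = x # s @ [y]"
  proof (cases r rule: rev_exhaust)
    case (snoc r1 y)
    then show ?thesis using that by (cases r1) auto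
  qed auto
  then show ?case
  proof cases
    case 1
    then have "\<forall>l\<in>set r. fst l = fst (hd r)"
      by (cases r) auto
    then show ?thesis by (intro exI[of _ "[]"] exI[of _ r]) auto
  next
    case (2 x s y)
    have "fst x = fst y"
    proof (rule ccontr)
      assume "fst x \<noteq> fst y"
      then have "reduced (list_power k r)"
        using less.prems 2 by (intro reduced_list_power) auto
      then show False
        using reduced_not_fp_equiv_Nil list_power_nonempty less.prems 2 by blast
    qed
    moreover have "proper (x # s @ [y])" "list_power k (x # s @ [y]) \<asymp> []"
      using less.prems 2 reduced_proper[OF less.prems(1)] by simp_all
    ultimately obtain r' where r': "reduced r'" "length r' < length (x # s @ [y])"
      "list_power k r' \<asymp> []" "x # s @ [y] \<asymp> [x] @ r' @ inv_list [x]"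
      using cyclic_reduction by blast
    then obtain v h j where vhj: "proper v" "\<forall>l\<in>set h. fst l = j" "r' \<asymp> v @ h @ inv_list v"
      using less.hyps less.prems(2) 2 by blast
    have "r \<asymp> [x] @ r' @ inv_list [x]"
      using r'(4) 2 by simp
    also have "\<dots> \<asymp> [x] @ (v @ h @ inv_list v) @ inv_list [x]"
      using vhj(3) by (rule fp_equiv_context)
    finally show ?thesis
      using vhj less.prems 2 by (intro exI[of _ "x # v"] exI[of _ h] exI[of _ j])
        (auto simp: inv_list_def reduced_def)
  qed
qed

theorem torsion_conj_factor:
  assumes "proper x" "0 < k" "list_power k x \<asymp> []"
  obtains v h j where "proper v" "\<forall>l\<in>set h. fst l = j" "x \<asymp> v @ h @ inv_list v"
proof -
  have x: "x \<asymp> reduce x"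
    using assms(1) by (rule fp_equiv_reduce_self)
  have "list_power k (reduce x) \<asymp> []"
    using fp_equiv_trans[OF fp_equiv_list_power[OF fp_equiv_sym[OF x]] assms(3)] .
  with assms(1,2) show ?thesis
    using reduced_torsion_conj_factor[of "reduce x" k] that fp_equiv_trans[OF x]
    by (metis proper_in_factors reduced_reduce)
qed

lemma fp_step_filter:
  assumes "fp_step G x y"
  shows "fp_step G (filter (\<lambda>l. P (fst l)) x) (filter (\<lambda>l. P (fst l)) y)
    \<or> filter (\<lambda>l. P (fst l)) x = filter (\<lambda>l. P (fst l)) y"
  using assms
proof (induction rule: fp_step.induct)
  case (merge a n b xs ys)
  then show ?case
    using fp_step.merge[of a G n b "filter (\<lambda>l. P (fst l)) xs" "filter (\<lambda>l. P (fst l)) ys"] by auto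
next
  case (cancel a n b xs ys)
  then show ?case
    using fp_step.cancel[of a G n b "filter (\<lambda>l. P (fst l)) xs" "filter (\<lambda>l. P (fst l)) ys"] by auto
qed

lemma fp_equiv_filter: "x \<asymp> y \<Longrightarrow> filter (\<lambda>l. P (fst l)) x \<asymp> filter (\<lambda>l. P (fst l)) y"
  unfolding fp_equiv_def
proof (induction rule: equivclp_induct)
  case (step y z)
  then show ?case using fp_step_filter[of y z P] fp_step_filter[of z y P]
    by (metis equivclp_into_equivclp)
qed simp

corollary torsion_filter_trivial:
  assumes "proper x" "0 < k" "list_power k x \<asymp> []"
  shows "filter (\<lambda>l. Q (fst l)) x \<asymp> [] \<or> filter (\<lambda>l. \<not> Q (fst l)) x \<asymp> []"
proof -
  obtain v h j where vhj: "proper v" "\<forall>l\<in>set h. fst l = j" "x \<asymp> v @ h @ inv_list v"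
    using torsion_conj_factor[OF assms] .
  have "filter (\<lambda>l. P (fst l)) x \<asymp> []" if "\<not> P j" for P
  proof -
    have "filter (\<lambda>l. P (fst l)) h = []"
      using vhj(2) that by (auto simp: filter_empty_conv)
    then have "filter (\<lambda>l. P (fst l)) x \<asymp> filter (\<lambda>l. P (fst l)) v @ inv_list (filter (\<lambda>l. P (fst l)) v)"
      using fp_equiv_filter[OF vhj(3), of P] by (simp add: filter_inv_list)
    then show ?thesis
      using r_inv_list[OF proper_filter[OF vhj(1)]] fp_equiv_trans by blast
  qed
  from this[of Q] this[of "\<lambda>n. \<not> Q n"] show ?thesis by (cases "Q j") auto
qed

end

section \<open>Infinite words\<close>

definition squeeze :: "rat \<Rightarrow> rat" where
  "squeeze x = x / (1 + \<bar>x\<bar>)"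

lemma abs_squeeze_less: "\<bar>squeeze x\<bar> < 1"
  by (simp add: squeeze_def)

lemma squeeze_inv_squeeze: "squeeze_inv (squeeze x) = x"
proof -
  have "1 - \<bar>squeeze x\<bar> = 1 / (1 + \<bar>x\<bar>)"
    by (simp add: squeeze_def field_simps)
  then show ?thesis by (simp add: squeeze_inv_def squeeze_def)
qed

lemma squeeze_squeeze_inv: "\<bar>y\<bar> < 1 \<Longrightarrow> squeeze (squeeze_inv y) = y"
proof -
  assume y: "\<bar>y\<bar> < 1"
  then have "1 + \<bar>squeeze_inv y\<bar> = 1 / (1 - \<bar>y\<bar>)"
    by (simp add: squeeze_inv_def field_simps)
  with y show ?thesis by (simp add: squeeze_inv_def squeeze_def)
qed

lemma strict_mono_squeeze: "strict_mono squeeze"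
proof (rule strict_monoI)
  fix x y :: rat
  assume xy: "x < y"
  have "x * (1 + \<bar>y\<bar>) < y * (1 + \<bar>x\<bar>)"
  proof (cases "x < 0 \<and> 0 \<le> y")
    case True
    then have "x * (1 + \<bar>y\<bar>) < 0" "0 \<le> y * (1 + \<bar>x\<bar>)"
      by (auto intro: mult_neg_pos)
    then show ?thesis by linarith
  qed (use xy in \<open>auto simp: algebra_simps abs_if\<close>)
  then show "squeeze x < squeeze y"
    by (simp add: squeeze_def divide_less_eq less_divide_eq add_pos_nonneg
        mult.commute[of "1 + \<bar>y\<bar>"])
qed

lemma squeeze_bounds: "-1 < squeeze x" "squeeze x < 1"
  using abs_squeeze_less[of x] by (auto simp: abs_less_iff)

lemma concat_word_left: "concat_word u v (squeeze p - 2) = u p"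
  using squeeze_bounds[of p] by (simp add: concat_word_def squeeze_inv_squeeze)

lemma concat_word_right: "concat_word u v (squeeze p + 2) = v p"
  using squeeze_bounds[of p] by (simp add: concat_word_def squeeze_inv_squeeze)

definition positions :: "nat set \<Rightarrow> (rat \<Rightarrow> (nat \<times> 'a) option) \<Rightarrow> rat set" where
  "positions N w = {q. \<exists>n a. w q = Some (n, a) \<and> n \<in> N}"

lemma positions_concat_word:
  "positions N (concat_word u v)
    = (\<lambda>p. squeeze p - 2) ` positions N u \<union> (\<lambda>p. squeeze p + 2) ` positions N v"
proof (intro equalityI subsetI)
  fix q
  assume q: "q \<in> positions N (concat_word u v)"
  show "q \<in> (\<lambda>p. squeeze p - 2) ` positions N u \<union> (\<lambda>p. squeeze p + 2) ` positions N v"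
  proof (cases "-3 < q \<and> q < -1")
    case True
    then have "q = squeeze (squeeze_inv (q + 2)) - 2"
      by (simp add: squeeze_squeeze_inv abs_less_iff)
    moreover have "squeeze_inv (q + 2) \<in> positions N u"
      using q True by (auto simp: positions_def concat_word_def)
    ultimately show ?thesis by blast
  next
    case False
    then have q': "1 < q \<and> q < 3"
      using q by (auto simp: positions_def concat_word_def split: if_splits)
    then have "q = squeeze (squeeze_inv (q - 2)) + 2"
      by (simp add: squeeze_squeeze_inv abs_less_iff)
    moreover have "squeeze_inv (q - 2) \<in> positions N v"
      using q q' False by (auto simp: positions_def concat_word_def)
    ultimately show ?thesis by blast
  qed
qed (auto simp: positions_def concat_word_left concat_word_right)

lemma restr_positions: "restr m w = map (\<lambda>q. the (w q)) (sorted_list_of_set (positions {..m} w))"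
  by (simp add: restr_def positions_def)

lemma sorted_list_of_set_eqI:
  "finite A \<Longrightarrow> sorted_wrt (<) l \<Longrightarrow> set l = A \<Longrightarrow> sorted_list_of_set A = l"
  by (metis sorted_list_of_set.set_sorted_key_list_of_set
      sorted_list_of_set.strict_sorted_key_list_of_set strict_sorted_equal)

lemma sorted_list_of_set_filter:
  "finite A \<Longrightarrow> sorted_list_of_set {x\<in>A. P x} = filter P (sorted_list_of_set A)"
  by (rule sorted_list_of_set_eqI) (auto intro: sorted_wrt_filter)

lemma is_word_empty [simp]: "is_word G (\<lambda>_. None)"
  by (simp add: is_word_def)

lemma restr_empty [simp]: "restr m (\<lambda>_. None) = []"
  by (simp add: restr_def)

definition restrict_word :: "(rat \<Rightarrow> bool) \<Rightarrow> (rat \<Rightarrow> 'c option) \<Rightarrow> rat \<Rightarrow> 'c option" where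
  "restrict_word P w q = (if P q then w q else None)"

lemma positions_restrict_word: "positions N (restrict_word P w) = {q \<in> positions N w. P q}"
  by (auto simp: positions_def restrict_word_def)

lemma sorted_filter_split:
  "sorted_wrt (<) (L :: 'a :: linorder list)
    \<Longrightarrow> L = filter (\<lambda>q. q < c) L @ filter (\<lambda>q. q = c) L @ filter (\<lambda>q. c < q) L"
proof (induction L)
  case (Cons x L)
  show ?case
  proof (cases "x < c")
    case False
    with Cons.prems have "\<forall>y\<in>set L. c < y" by force
    then have "filter (\<lambda>q. q < c) L = []" "filter (\<lambda>q. q = c) L = []" "filter (\<lambda>q. c < q) L = L"
      by (auto simp: filter_empty_conv)
    with False show ?thesis by auto
  qed (use Cons in auto)
qed simp

context group_family
begin

text \<open>These lemmas need no group structure; they live in the locale only so that \<open>G\<close> is fixed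
  and the simplifier can discharge side conditions \<^term>\<open>is_word G u\<close> whose \<open>G\<close> does not occur
  in the rewritten term.\<close>

lemma finite_positions: "is_word G w \<Longrightarrow> finite N \<Longrightarrow> finite (positions N w)"
proof -
  assume "is_word G w" "finite N"
  moreover have "positions N w = (\<Union>n\<in>N. {q. \<exists>a. w q = Some (n, a)})"
    by (auto simp: positions_def)
  ultimately show ?thesis by (simp add: is_word_def)
qed

lemma is_word_letter: "is_word G w \<Longrightarrow> w q = Some (n, a) \<Longrightarrow> a \<in> carrier (G n) \<and> a \<noteq> \<one>\<^bsub>G n\<^esub>"
  by (simp add: is_word_def)

lemma restr_letter: "is_word G w \<Longrightarrow> l \<in> set (restr m w) \<Longrightarrow> \<exists>q. w q = Some l \<and> fst l \<le> m"
  using finite_positions[of w "{..m}"] by (fastforce simp: restr_positions positions_def)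

lemma is_word_concat_word: "is_word G u \<Longrightarrow> is_word G v \<Longrightarrow> is_word G (concat_word u v)"
proof -
  assume u: "is_word G u" and v: "is_word G v"
  have "finite (positions {n} (concat_word u v))" for n
    using finite_positions[OF u, of "{n}"] finite_positions[OF v, of "{n}"]
    by (simp add: positions_concat_word)
  moreover have "a \<in> carrier (G n) \<and> a \<noteq> \<one>\<^bsub>G n\<^esub>" if "concat_word u v q = Some (n, a)" for q n a
    using that is_word_letter[OF u] is_word_letter[OF v] by (auto simp: concat_word_def split: if_splits)
  ultimately show ?thesis by (simp add: is_word_def positions_def)
qed

lemma restr_concat_word:
  assumes u: "is_word G u" and v: "is_word G v"
  shows "restr m (concat_word u v) = restr m u @ restr m v"
proof -
  let ?Lu = "sorted_list_of_set (positions {..m} u)"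
  let ?Lv = "sorted_list_of_set (positions {..m} v)"
  have "sorted_list_of_set (positions {..m} (concat_word u v))
      = map (\<lambda>p. squeeze p - 2) ?Lu @ map (\<lambda>p. squeeze p + 2) ?Lv"
  proof (rule sorted_list_of_set_eqI)
    show "finite (positions {..m} (concat_word u v))"
      using is_word_concat_word[OF u v] by (rule finite_positions) simp
    show "set (map (\<lambda>p. squeeze p - 2) ?Lu @ map (\<lambda>p. squeeze p + 2) ?Lv)
        = positions {..m} (concat_word u v)"
      using finite_positions[OF u, of "{..m}"] finite_positions[OF v, of "{..m}"]
      by (simp add: positions_concat_word)
    have "sorted_wrt (\<lambda>p p'. squeeze p < squeeze p') (sorted_list_of_set A)" for A
      using strict_mono_squeeze
      by (auto simp: strict_mono_less intro: sorted_wrt_mono_rel[where P = "(<)"])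
    moreover have "squeeze p - 2 < squeeze p' + 2" for p p'
      using squeeze_bounds[of p] squeeze_bounds[of p'] by linarith
    ultimately show "sorted_wrt (<) (map (\<lambda>p. squeeze p - 2) ?Lu @ map (\<lambda>p. squeeze p + 2) ?Lv)"
      by (simp add: sorted_wrt_append sorted_wrt_map)
  qed
  then show ?thesis by (simp add: restr_positions concat_word_left concat_word_right)
qed

lemma is_word_restrict_word: "is_word G w \<Longrightarrow> is_word G (restrict_word P w)"
proof -
  assume w: "is_word G w"
  have "positions {n} (restrict_word P w) \<subseteq> positions {n} w" for n
    by (simp add: positions_restrict_word)
  then have "finite (positions {n} (restrict_word P w))" for n
    using finite_positions[OF w, of "{n}"] by (blast intro: finite_subset)
  with w show ?thesis by (simp add: is_word_def positions_def restrict_word_def)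
qed

lemma restr_restrict_word:
  assumes w: "is_word G w"
  shows "restr m (restrict_word P w)
    = map (\<lambda>q. the (w q)) (filter P (sorted_list_of_set (positions {..m} w)))"
proof -
  have "restr m (restrict_word P w)
      = map (\<lambda>q. the (restrict_word P w q)) (filter P (sorted_list_of_set (positions {..m} w)))"
    using finite_positions[OF w, of "{..m}"]
    by (simp add: restr_positions positions_restrict_word sorted_list_of_set_filter)
  also have "\<dots> = map (\<lambda>q. the (w q)) (filter P (sorted_list_of_set (positions {..m} w)))"
    by (rule map_cong) (auto simp: restrict_word_def)
  finally show ?thesis .
qed

lemma restr_split:
  assumes "is_word G w"
  shows "restr m w = restr m (restrict_word (\<lambda>q. q < c) w) @ restr m (restrict_word (\<lambda>q. q = c) w)
    @ restr m (restrict_word (\<lambda>q. c < q) w)"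
proof -
  let ?L = "sorted_list_of_set (positions {..m} w)"
  have "?L = filter (\<lambda>q. q < c) ?L @ filter (\<lambda>q. q = c) ?L @ filter (\<lambda>q. c < q) ?L"
    by (rule sorted_filter_split) simp
  then show ?thesis
    by (metis restr_restrict_word[OF assms] restr_positions map_append)
qed

lemma restr_restrict_word_omit:
  assumes w: "is_word G w"
  shows "restr m (restrict_word (\<lambda>q. q \<noteq> c) w)
    = restr m (restrict_word (\<lambda>q. q < c) w) @ restr m (restrict_word (\<lambda>q. c < q) w)"
proof -
  have "restrict_word (\<lambda>q. q < c) (restrict_word (\<lambda>q. q \<noteq> c) w) = restrict_word (\<lambda>q. q < c) w"
    "restrict_word (\<lambda>q. q = c) (restrict_word (\<lambda>q. q \<noteq> c) w) = (\<lambda>_. None)"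
    "restrict_word (\<lambda>q. c < q) (restrict_word (\<lambda>q. q \<noteq> c) w) = restrict_word (\<lambda>q. c < q) w"
    by (auto simp: restrict_word_def)
  then show ?thesis
    using restr_split[OF is_word_restrict_word[OF w, of "\<lambda>q. q \<noteq> c"], of m c] by simp
qed

lemma filter_restr:
  assumes w: "is_word G w" and "m' \<le> m"
  shows "filter (\<lambda>l. fst l \<le> m') (restr m w) = restr m' w"
proof -
  have "positions {..m'} w = {q \<in> positions {..m} w. fst (the (w q)) \<le> m'}"
    using \<open>m' \<le> m\<close> by (auto simp: positions_def)
  then show ?thesis
    using finite_positions[OF w, of "{..m}"]
    by (simp add: restr_positions sorted_list_of_set_filter filter_map o_def)
qed

lemma proper_restr: "is_word G w \<Longrightarrow> proper (restr m w)"
  using restr_letter[of w _ m] is_word_letter[of w] by (fastforce simp: proper_def)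

definition inv_word :: "(rat \<Rightarrow> (nat \<times> 'a) option) \<Rightarrow> rat \<Rightarrow> (nat \<times> 'a) option" where
  "inv_word u q = map_option (\<lambda>l. (fst l, inv\<^bsub>G (fst l)\<^esub> (snd l))) (u (- q))"

lemma positions_inv_word: "positions N (inv_word u) = uminus ` positions N u"
  by (force simp: positions_def inv_word_def image_iff)

lemma is_word_inv_word: "is_word G u \<Longrightarrow> is_word G (inv_word u)"
proof -
  assume u: "is_word G u"
  have "finite (positions {n} (inv_word u))" for n
    using finite_positions[OF u, of "{n}"] by (simp add: positions_inv_word)
  moreover have "a \<in> carrier (G n) \<and> a \<noteq> \<one>\<^bsub>G n\<^esub>" if "inv_word u q = Some (n, a)" for q n a
    using that is_word_letter[OF u] by (auto simp: inv_word_def)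
  ultimately show ?thesis by (simp add: is_word_def positions_def)
qed

lemma restr_inv_word:
  assumes u: "is_word G u"
  shows "restr m (inv_word u) = inv_list (restr m u)"
proof -
  let ?L = "sorted_list_of_set (positions {..m} u)"
  have "sorted_list_of_set (positions {..m} (inv_word u)) = rev (map uminus ?L)"
  proof (rule sorted_list_of_set_eqI)
    show "finite (positions {..m} (inv_word u))"
      using is_word_inv_word[OF u] by (rule finite_positions) simp
    show "set (rev (map uminus ?L)) = positions {..m} (inv_word u)"
      using finite_positions[OF u, of "{..m}"] by (simp add: positions_inv_word)
    show "sorted_wrt (<) (rev (map uminus ?L))"
      by (simp add: sorted_wrt_rev sorted_wrt_map)
  qed
  moreover have "the (inv_word u (- q)) = (fst (the (u q)), inv\<^bsub>G (fst (the (u q)))\<^esub> (snd (the (u q))))"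
    if "q \<in> set ?L" for q
    using that finite_positions[OF u, of "{..m}"] by (auto simp: inv_word_def positions_def)
  ultimately show ?thesis
    by (simp add: restr_positions inv_list_def rev_map[symmetric] o_def cong: map_cong)
qed

end

section \<open>The topologist's product\<close>

context group_family
begin

abbreviation T where "T \<equiv> top_product G"
abbreviation cls where "cls \<equiv> word_class G"

lemma word_equiv_refl [simp]: "word_equiv G u u"
  by (simp add: word_equiv_def)

lemma word_equiv_sym: "word_equiv G u v \<Longrightarrow> word_equiv G v u"
  by (simp add: word_equiv_def fp_equiv_sym)

lemma word_equiv_trans: "word_equiv G u v \<Longrightarrow> word_equiv G v w \<Longrightarrow> word_equiv G u w"
  by (meson word_equiv_def fp_equiv_trans)

lemma word_equivI: "(\<And>m. restr m u = restr m v) \<Longrightarrow> word_equiv G u v"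
  by (simp add: word_equiv_def)

lemma word_class_self: "is_word G u \<Longrightarrow> u \<in> cls u"
  by (simp add: word_class_def)

lemma mem_word_class: "v \<in> cls u \<Longrightarrow> is_word G v \<and> word_equiv G u v"
  by (simp add: word_class_def)

lemma word_class_eqI: "word_equiv G u v \<Longrightarrow> cls u = cls v"
  unfolding word_class_def using word_equiv_trans word_equiv_sym by blast

lemma word_class_eqD: "cls u = cls v \<Longrightarrow> is_word G v \<Longrightarrow> word_equiv G u v"
  using word_class_self mem_word_class by blast

lemma carrier_top_product: "carrier T = cls ` {u. is_word G u}"
  by (simp add: top_product_def)

lemma one_top_product: "\<one>\<^bsub>T\<^esub> = cls (\<lambda>_. None)"
  by (simp add: top_product_def)

lemma word_class_in_carrier: "is_word G u \<Longrightarrow> cls u \<in> carrier T"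
  by (simp add: carrier_top_product)

lemma top_product_carrierE:
  assumes "C \<in> carrier T"
  obtains u where "is_word G u" "C = cls u"
  using assms by (auto simp: carrier_top_product)

lemma word_equiv_concat_word:
  "is_word G u \<Longrightarrow> is_word G v \<Longrightarrow> is_word G u' \<Longrightarrow> is_word G v' \<Longrightarrow>
    word_equiv G u u' \<Longrightarrow> word_equiv G v v' \<Longrightarrow> word_equiv G (concat_word u v) (concat_word u' v')"
  by (simp add: word_equiv_def restr_concat_word fp_equiv_append)

lemma mult_top_product: "is_word G u \<Longrightarrow> is_word G v \<Longrightarrow> cls u \<otimes>\<^bsub>T\<^esub> cls v = cls (concat_word u v)"
proof -
  assume u: "is_word G u" and v: "is_word G v"
  have "(SOME x. x \<in> cls u) \<in> cls u" "(SOME x. x \<in> cls v) \<in> cls v"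
    using someI[of "\<lambda>x. x \<in> cls _", OF word_class_self] u v by blast+
  then show ?thesis
    using u v by (auto simp: top_product_def intro!: word_class_eqI word_equiv_sym[OF word_equiv_concat_word]
        dest: mem_word_class)
qed

lemma l_inv_word_equiv: "is_word G u \<Longrightarrow> word_equiv G (concat_word (inv_word u) u) (\<lambda>_. None)"
  by (simp add: word_equiv_def restr_concat_word is_word_inv_word restr_inv_word l_inv_list
      proper_restr)

lemma group_top_product: "group T"
proof (rule groupI)
  fix x y
  assume "x \<in> carrier T" "y \<in> carrier T"
  then show "x \<otimes>\<^bsub>T\<^esub> y \<in> carrier T"
    by (auto elim!: top_product_carrierE simp: mult_top_product is_word_concat_word word_class_in_carrier)
next
  show "\<one>\<^bsub>T\<^esub> \<in> carrier T"
    by (simp add: one_top_product word_class_in_carrier)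
next
  fix x y z
  assume "x \<in> carrier T" "y \<in> carrier T" "z \<in> carrier T"
  then obtain u v w where u: "is_word G u" "x = cls u" and v: "is_word G v" "y = cls v"
    and w: "is_word G w" "z = cls w"
    by (meson top_product_carrierE)
  have "cls (concat_word (concat_word u v) w) = cls (concat_word u (concat_word v w))"
    by (intro word_class_eqI word_equivI) (simp add: restr_concat_word is_word_concat_word u v w)
  then show "x \<otimes>\<^bsub>T\<^esub> y \<otimes>\<^bsub>T\<^esub> z = x \<otimes>\<^bsub>T\<^esub> (y \<otimes>\<^bsub>T\<^esub> z)"
    using u v w by (simp add: mult_top_product is_word_concat_word)
next
  fix x
  assume "x \<in> carrier T"
  then obtain u where u: "is_word G u" "x = cls u"
    by (rule top_product_carrierE)
  have "cls (concat_word (\<lambda>_. None) u) = cls u"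
    by (intro word_class_eqI word_equivI) (simp add: restr_concat_word u)
  then show "\<one>\<^bsub>T\<^esub> \<otimes>\<^bsub>T\<^esub> x = x"
    using u by (simp add: one_top_product mult_top_product)
  have "cls (inv_word u) \<otimes>\<^bsub>T\<^esub> x = \<one>\<^bsub>T\<^esub>"
    using u l_inv_word_equiv
    by (simp add: one_top_product mult_top_product is_word_inv_word word_class_eqI)
  then show "\<exists>y\<in>carrier T. y \<otimes>\<^bsub>T\<^esub> x = \<one>\<^bsub>T\<^esub>"
    using word_class_in_carrier[OF is_word_inv_word[OF u(1)]] by blast
qed

lemma inv_top_product: "is_word G u \<Longrightarrow> inv\<^bsub>T\<^esub> (cls u) = cls (inv_word u)"
  using group.inv_equality[OF group_top_product] l_inv_word_equiv
  by (simp add: one_top_product mult_top_product is_word_inv_word word_class_eqI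
      word_class_in_carrier)

lemma pow_top_product:
  assumes "is_word G u"
  obtains w where "is_word G w" "cls u [^]\<^bsub>T\<^esub> (k::nat) = cls w" "\<And>m. restr m w \<asymp> list_power k (restr m u)"
proof -
  have "\<exists>w. is_word G w \<and> cls u [^]\<^bsub>T\<^esub> k = cls w \<and> (\<forall>m. restr m w \<asymp> list_power k (restr m u))"
  proof (induction k)
    case 0
    show ?case by (intro exI[of _ "\<lambda>_. None"]) (simp add: one_top_product)
  next
    case (Suc k)
    then obtain w where w: "is_word G w" "cls u [^]\<^bsub>T\<^esub> k = cls w" "\<forall>m. restr m w \<asymp> list_power k (restr m u)"
      by blast
    have "cls u [^]\<^bsub>T\<^esub> Suc k = cls (concat_word w u)"
      using w assms by (simp add: mult_top_product)
    moreover have "restr m (concat_word w u) \<asymp> list_power (Suc k) (restr m u)" for m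
      using w assms by (simp add: restr_concat_word list_power_Suc' fp_equiv_append)
    ultimately show ?case
      using is_word_concat_word[OF w(1) assms] by blast
  qed
  with that show ?thesis by blast
qed

end

section \<open>The normal closure of the free product\<close>

lemma (in group) normal_closure_normal:
  assumes S: "S \<subseteq> carrier G"
  shows "normal_closure G S \<lhd> G"
  unfolding normal_closure_def
proof (rule normal_generateI)
  show "(\<Union>g\<in>carrier G. (\<lambda>h. g \<otimes> h \<otimes> inv g) ` S) \<subseteq> carrier G"
    using S by auto
next
  fix h g
  assume "h \<in> (\<Union>g\<in>carrier G. (\<lambda>h. g \<otimes> h \<otimes> inv g) ` S)" and g: "g \<in> carrier G"
  then obtain g' s where g': "g' \<in> carrier G" and s: "s \<in> S" and h: "h = g' \<otimes> s \<otimes> inv g'"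
    by blast
  have "g \<otimes> h \<otimes> inv g = (g \<otimes> g') \<otimes> s \<otimes> inv (g \<otimes> g')"
    using g g' s S by (auto simp: h inv_mult_group m_assoc)
  with g g' s show "g \<otimes> h \<otimes> inv g \<in> (\<Union>g\<in>carrier G. (\<lambda>h. g \<otimes> h \<otimes> inv g) ` S)"
    by blast
qed

lemma (in group) conj_mem_normal_closure:
  "g \<in> carrier G \<Longrightarrow> s \<in> S \<Longrightarrow> g \<otimes> s \<otimes> inv g \<in> normal_closure G S"
  unfolding normal_closure_def by (rule generate.incl) blast

lemma (in group) normal_closure_subset:
  assumes "subgroup K G" and "\<And>g s. g \<in> carrier G \<Longrightarrow> s \<in> S \<Longrightarrow> g \<otimes> s \<otimes> inv g \<in> K"
  shows "normal_closure G S \<subseteq> K"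
  unfolding normal_closure_def using assms by (intro generate_subgroup_incl) auto

context group_family
begin

abbreviation N where "N \<equiv> normal_closure T (free_product_sub G)"

abbreviation above :: "nat \<Rightarrow> (nat \<times> 'a) list \<Rightarrow> (nat \<times> 'a) list" where
  "above M xs \<equiv> filter (\<lambda>l. M < fst l) xs"

definition trivial_above :: "nat \<Rightarrow> (rat \<Rightarrow> (nat \<times> 'a) option) \<Rightarrow> bool" where
  "trivial_above M u \<longleftrightarrow> (\<forall>m. above M (restr m u) \<asymp> [])"

definition tail_trivial :: "(rat \<Rightarrow> (nat \<times> 'a) option) set set" where
  "tail_trivial = {C \<in> carrier T. \<exists>M u. u \<in> C \<and> trivial_above M u}"

lemma normal_closure_free_product_normal: "N \<lhd> T"
  by (rule group.normal_closure_normal[OF group_top_product]) (auto simp: free_product_sub_def)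

lemma trivial_above_word_equiv: "word_equiv G u v \<Longrightarrow> trivial_above M u \<Longrightarrow> trivial_above M v"
  unfolding trivial_above_def word_equiv_def
  using fp_equiv_filter[of _ _ "\<lambda>n. M < n"] fp_equiv_sym fp_equiv_trans by metis

lemma trivial_above_mono: "M \<le> M' \<Longrightarrow> trivial_above M u \<Longrightarrow> trivial_above M' u"
  unfolding trivial_above_def
proof
  fix m
  assume "M \<le> M'" and "\<forall>m. above M (restr m u) \<asymp> []"
  then have "above M' (above M (restr m u)) \<asymp> []"
    using fp_equiv_filter[of "above M (restr m u)" "[]" "\<lambda>n. M' < n"] by auto
  moreover have "above M' (above M (restr m u)) = above M' (restr m u)"
    using \<open>M \<le> M'\<close> unfolding filter_filter by (intro filter_cong) auto
  ultimately show "above M' (restr m u) \<asymp> []" by simp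
qed

lemma tail_trivialI: "is_word G u \<Longrightarrow> trivial_above M u \<Longrightarrow> cls u \<in> tail_trivial"
  unfolding tail_trivial_def using word_class_in_carrier word_class_self by blast

lemma tail_trivialE:
  assumes "C \<in> tail_trivial"
  obtains u M where "is_word G u" "C = cls u" "trivial_above M u"
proof -
  obtain M u w where "u \<in> C" "trivial_above M u" "is_word G w" "C = cls w"
    using assms unfolding tail_trivial_def by (auto elim: top_product_carrierE)
  then show ?thesis
    using that mem_word_class[of u w] word_class_eqI by metis
qed

lemma subgroup_tail_trivial: "subgroup tail_trivial T"
proof (rule group.subgroupI[OF group_top_product])
  show "tail_trivial \<subseteq> carrier T"
    by (auto simp: tail_trivial_def)
  have "trivial_above 0 (\<lambda>_. None)"
    by (simp add: trivial_above_def)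
  then show "tail_trivial \<noteq> {}"
    using tail_trivialI[of "\<lambda>_. None"] by auto
next
  fix a
  assume "a \<in> tail_trivial"
  then obtain u M where u: "is_word G u" "a = cls u" "trivial_above M u"
    by (rule tail_trivialE)
  have "trivial_above M (inv_word u)"
    using u(3) fp_equiv_Nil_inv_list[OF proper_filter[OF proper_restr[OF u(1)]]]
    by (simp add: trivial_above_def restr_inv_word u(1) filter_inv_list)
  then show "inv\<^bsub>T\<^esub> a \<in> tail_trivial"
    using u inv_top_product tail_trivialI is_word_inv_word by metis
next
  fix a b
  assume "a \<in> tail_trivial" "b \<in> tail_trivial"
  then obtain u M v M' where u: "is_word G u" "a = cls u" "trivial_above M u"
    and v: "is_word G v" "b = cls v" "trivial_above M' v"
    by (metis tail_trivialE)
  have "trivial_above (max M M') u" "trivial_above (max M M') v"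
    using trivial_above_mono[OF max.cobounded1 u(3)] trivial_above_mono[OF max.cobounded2 v(3)] .
  then have "trivial_above (max M M') (concat_word u v)"
    using u v fp_equiv_append[of _ "[]" _ "[]"]
    by (simp add: trivial_above_def restr_concat_word)
  then show "a \<otimes>\<^bsub>T\<^esub> b \<in> tail_trivial"
    using u v by (simp add: mult_top_product tail_trivialI is_word_concat_word)
qed

lemma finite_support_above_Nil:
  assumes u: "is_word G u" and fin: "finite {q. u q \<noteq> None}"
  obtains M where "\<And>m. above M (restr m u) = []"
proof -
  obtain M where M: "\<forall>n\<in>(\<lambda>q. fst (the (u q))) ` {q. u q \<noteq> None}. n \<le> M"
    using fin finite_nat_set_iff_bounded_le by blast
  have "above M (restr m u) = []" for m
    using M restr_letter[OF u] by (fastforce simp: filter_empty_conv)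
  with that show ?thesis by blast
qed

lemma normal_closure_subset_tail_trivial: "N \<subseteq> tail_trivial"
proof (rule group.normal_closure_subset[OF group_top_product subgroup_tail_trivial])
  fix g f
  assume g: "g \<in> carrier T" and f: "f \<in> free_product_sub G"
  obtain w where w: "is_word G w" "g = cls w"
    using g by (rule top_product_carrierE)
  obtain u where "u \<in> f" "finite {q. u q \<noteq> None}" "f \<in> carrier T"
    using f by (auto simp: free_product_sub_def)
  then have u: "is_word G u" "f = cls u" "finite {q. u q \<noteq> None}"
    by (metis top_product_carrierE mem_word_class word_class_eqI)+
  obtain M where M: "\<And>m. above M (restr m u) = []"
    using finite_support_above_Nil[OF u(1,3)] by blast
  have "trivial_above M (concat_word (concat_word w u) (inv_word w))"
    unfolding trivial_above_def
  proof
    fix m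
    have "above M (restr m (concat_word (concat_word w u) (inv_word w)))
        = above M (restr m w) @ inv_list (above M (restr m w))"
      using M by (simp add: restr_concat_word restr_inv_word is_word_concat_word is_word_inv_word
          w u filter_inv_list)
    then show "above M (restr m (concat_word (concat_word w u) (inv_word w))) \<asymp> []"
      using r_inv_list[OF proper_filter[OF proper_restr[OF w(1)]]] by simp
  qed
  then show "g \<otimes>\<^bsub>T\<^esub> f \<otimes>\<^bsub>T\<^esub> inv\<^bsub>T\<^esub> g \<in> tail_trivial"
    using w u by (simp add: inv_top_product mult_top_product is_word_concat_word is_word_inv_word
        tail_trivialI)
qed

lemma word_class_split:
  assumes w: "is_word G w"
  shows "cls w = cls (restrict_word (\<lambda>q. q < c) w) \<otimes>\<^bsub>T\<^esub> cls (restrict_word (\<lambda>q. q = c) w)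
      \<otimes>\<^bsub>T\<^esub> cls (restrict_word (\<lambda>q. c < q) w)"
    and "cls (restrict_word (\<lambda>q. q \<noteq> c) w)
      = cls (restrict_word (\<lambda>q. q < c) w) \<otimes>\<^bsub>T\<^esub> cls (restrict_word (\<lambda>q. c < q) w)"
proof -
  define u l v where "u = restrict_word (\<lambda>q. q < c) w" and "l = restrict_word (\<lambda>q. q = c) w"
    and "v = restrict_word (\<lambda>q. c < q) w"
  have words: "is_word G u" "is_word G l" "is_word G v"
    unfolding u_def l_def v_def using is_word_restrict_word[OF w] by auto
  have split: "restr m w = restr m u @ restr m l @ restr m v" for m
    unfolding u_def l_def v_def by (rule restr_split[OF w])
  have "cls w = cls (concat_word (concat_word u l) v)"
    by (intro word_class_eqI word_equivI) (simp add: restr_concat_word is_word_concat_word words split)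
  then show "cls w = cls u \<otimes>\<^bsub>T\<^esub> cls l \<otimes>\<^bsub>T\<^esub> cls v"
    by (simp add: mult_top_product is_word_concat_word words)
  have "cls (restrict_word (\<lambda>q. q \<noteq> c) w) = cls (concat_word u v)"
    unfolding u_def v_def using restr_restrict_word_omit[OF w, of _ c] is_word_restrict_word[OF w]
    by (intro word_class_eqI word_equivI) (simp add: restr_concat_word)
  then show "cls (restrict_word (\<lambda>q. q \<noteq> c) w) = cls u \<otimes>\<^bsub>T\<^esub> cls v"
    by (simp add: mult_top_product words)
qed

lemma restrict_word_single_in_free_product:
  assumes w: "is_word G w"
  shows "cls (restrict_word (\<lambda>q. q = c) w) \<in> free_product_sub G"
proof -
  have "finite {q. restrict_word (\<lambda>q. q = c) w q \<noteq> None}"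
    by (rule finite_subset[of _ "{c}"]) (auto simp: restrict_word_def)
  then show ?thesis
    unfolding free_product_sub_def
    using word_class_in_carrier word_class_self is_word_restrict_word[OF w] by blast
qed

lemma trivial_above_omit:
  assumes w: "is_word G w" and c: "c \<in> positions {..M} w" and "trivial_above M w"
  shows "trivial_above M (restrict_word (\<lambda>q. q \<noteq> c) w)"
proof -
  have "above M (restr m (restrict_word (\<lambda>q. q = c) w)) = []" for m
    using c restr_letter[OF is_word_restrict_word[OF w]]
    by (fastforce simp: filter_empty_conv restrict_word_def positions_def split: if_splits)
  with assms show ?thesis
    by (simp add: trivial_above_def restr_restrict_word_omit restr_split[OF w, of _ c])
qed

lemma trivial_above_no_low_letters:
  assumes w: "is_word G w" and "positions {..M} w = {}" and "trivial_above M w"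
  shows "cls w = \<one>\<^bsub>T\<^esub>"
proof -
  have "above M (restr m w) = restr m w" for m
    using assms restr_letter[OF w] by (force simp: filter_id_conv positions_def)
  with assms have "word_equiv G w (\<lambda>_. None)"
    by (simp add: trivial_above_def word_equiv_def)
  then show ?thesis
    by (simp add: one_top_product word_class_eqI)
qed

lemma trivial_above_in_normal_closure: "is_word G w \<Longrightarrow> trivial_above M w \<Longrightarrow> cls w \<in> N"
proof (induction "card (positions {..M} w)" arbitrary: w rule: less_induct)
  case less
  interpret T: group T
    by (rule group_top_product)
  interpret N: subgroup N T
    using normal_closure_free_product_normal by (simp add: normal_def)
  show ?case
  proof (cases "positions {..M} w = {}")
    case True
    then show ?thesis using less.prems trivial_above_no_low_letters by simp
  next
    case False
    then obtain c where c: "c \<in> positions {..M} w" by blast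
    let ?u = "cls (restrict_word (\<lambda>q. q < c) w)" and ?l = "cls (restrict_word (\<lambda>q. q = c) w)"
      and ?v = "cls (restrict_word (\<lambda>q. c < q) w)" and ?x = "restrict_word (\<lambda>q. q \<noteq> c) w"
    have carrier: "?u \<in> carrier T" "?l \<in> carrier T" "?v \<in> carrier T"
      using less.prems(1) by (simp_all add: word_class_in_carrier is_word_restrict_word)
    have "positions {..M} ?x = positions {..M} w - {c}"
      by (auto simp: positions_restrict_word)
    then have "card (positions {..M} ?x) < card (positions {..M} w)"
      using card_Diff1_less[OF finite_positions[OF less.prems(1)] c] by simp
    then have "cls ?x \<in> N"
      using less.hyps less.prems c by (simp add: is_word_restrict_word trivial_above_omit)
    moreover have "?u \<otimes>\<^bsub>T\<^esub> ?l \<otimes>\<^bsub>T\<^esub> inv\<^bsub>T\<^esub> ?u \<in> N"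
      using carrier less.prems(1)
      by (simp add: T.conj_mem_normal_closure restrict_word_single_in_free_product)
    moreover have "cls w = (?u \<otimes>\<^bsub>T\<^esub> ?l \<otimes>\<^bsub>T\<^esub> inv\<^bsub>T\<^esub> ?u) \<otimes>\<^bsub>T\<^esub> cls ?x"
    proof -
      have "inv\<^bsub>T\<^esub> ?u \<otimes>\<^bsub>T\<^esub> (?u \<otimes>\<^bsub>T\<^esub> ?v) = ?v"
        using carrier by (simp add: T.m_assoc[symmetric])
      then show ?thesis
        using carrier word_class_split[OF less.prems(1), of c] by (simp add: T.m_assoc)
    qed
    ultimately show ?thesis by simp
  qed
qed

lemma tail_trivial_eq_normal_closure: "tail_trivial = N"
  using normal_closure_subset_tail_trivial trivial_above_in_normal_closure
  by (auto elim: tail_trivialE)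

end

section \<open>Torsion-freeness of the archipelago group\<close>

lemma (in normal) torsion_free_FactGroup:
  assumes root_closed: "\<And>a k. a \<in> carrier G \<Longrightarrow> 0 < k \<Longrightarrow> a [^] (k::nat) \<in> H \<Longrightarrow> a \<in> H"
  shows "torsion_free (G Mod H)"
  unfolding torsion_free_def
proof (intro ballI allI impI)
  fix Y and k :: nat
  assume Y: "Y \<in> carrier (G Mod H)" and k: "0 < k \<and> Y [^]\<^bsub>G Mod H\<^esub> k = \<one>\<^bsub>G Mod H\<^esub>"
  then obtain a where a: "a \<in> carrier G" "Y = H #> a"
    by (auto simp: FactGroup_def RCOSETS_def)
  have "Y [^]\<^bsub>G Mod H\<^esub> k = H #> (a [^] k)"
    using hom_nat_pow[OF r_coset_hom_Mod a(1) is_group factorgroup_is_group] a(2) by simp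
  with k have "H #> (a [^] k) = H"
    by (simp add: FactGroup_def)
  then have "a [^] k \<in> H"
    using coset_join1 subgroup_axioms a(1) by blast
  then have "a \<in> H"
    using root_closed a(1) k by blast
  then show "Y = \<one>\<^bsub>G Mod H\<^esub>"
    using coset_join2 subgroup_axioms a by (simp add: FactGroup_def)
qed

context group_family
begin

lemma trivial_above_root:
  assumes w: "is_word G w" and k: "0 < k" and pow: "\<And>m. list_power k (above M (restr m w)) \<asymp> []"
  obtains M' where "trivial_above M' w"
proof (cases "\<forall>m. above M (restr m w) \<asymp> []")
  case True
  with that show ?thesis by (simp add: trivial_above_def)
next
  case False
  then obtain m0 where m0: "\<not> above M (restr m0 w) \<asymp> []" by blast
  have low: "above m' (restr m w) = []" if "m \<le> m'" for m m'
    using restr_letter[OF w] that by (fastforce simp: filter_empty_conv)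
  have "M \<le> m0"
    using low[of m0 M] m0 by (cases "M \<le> m0") auto
  have "above m0 (restr m w) \<asymp> []" for m
  proof (cases "m \<le> m0")
    case False
    have "filter (\<lambda>l. fst l \<le> m0) (above M (restr m w))
        = above M (filter (\<lambda>l. fst l \<le> m0) (restr m w))"
      by (simp add: filter_filter conj_commute)
    also have "\<dots> = above M (restr m0 w)"
      using filter_restr[OF w, of m0 m] False by simp
    finally have "filter (\<lambda>l. fst l \<le> m0) (above M (restr m w)) = above M (restr m0 w)" .
    moreover have "filter (\<lambda>l. \<not> fst l \<le> m0) (above M (restr m w)) = above m0 (restr m w)"
      using \<open>M \<le> m0\<close> unfolding filter_filter by (intro filter_cong) auto
    ultimately show ?thesis
      using torsion_filter_trivial[OF proper_filter[OF proper_restr[OF w]] k pow[of m],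
          where Q = "\<lambda>n. n \<le> m0"] m0
      by auto
  qed (simp add: low)
  then have "trivial_above m0 w"
    by (simp add: trivial_above_def)
  then show ?thesis by (rule that)
qed

lemma tail_trivial_root:
  assumes a: "a \<in> carrier T" and k: "0 < k" and pow: "a [^]\<^bsub>T\<^esub> (k::nat) \<in> tail_trivial"
  shows "a \<in> tail_trivial"
proof -
  obtain w where w: "is_word G w" "a = cls w"
    using a by (rule top_product_carrierE)
  obtain wk where wk: "is_word G wk" "a [^]\<^bsub>T\<^esub> k = cls wk"
    and restr_wk: "\<And>m. restr m wk \<asymp> list_power k (restr m w)"
    using pow_top_product[OF w(1)] w(2) by metis
  obtain u M where u: "is_word G u" "cls wk = cls u" "trivial_above M u"
    using pow wk(2) by (metis tail_trivialE)
  have "trivial_above M wk"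
    using trivial_above_word_equiv[OF word_class_eqD[OF u(2) u(1), THEN word_equiv_sym] u(3)] .
  then have "list_power k (above M (restr m w)) \<asymp> []" for m
    using fp_equiv_filter[OF fp_equiv_sym[OF restr_wk[of m]], of "\<lambda>n. M < n"] fp_equiv_trans
    unfolding trivial_above_def by (metis filter_list_power)
  then obtain M' where "trivial_above M' w"
    using trivial_above_root[OF w(1) k] by blast
  with w show ?thesis by (simp add: tail_trivialI)
qed

end

theorem proposition8:
  fixes G :: "nat \<Rightarrow> ('a, 'b) monoid_scheme"
  assumes "\<And>n. group (G n)"
  shows "torsion_free (archipelago G)"
proof -
  interpret group_family G
    by (simp add: group_family_def assms)
  show ?thesis
    unfolding archipelago_def
    using normal.torsion_free_FactGroup[OF normal_closure_free_product_normal] tail_trivial_root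
    by (simp add: tail_trivial_eq_normal_closure)
qed

end
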